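(* For $T$ large enough let $Q_T$ denote the unique $T$-periodic solution of the pendulum equation $\ddot q=\sin q$ with small positive energy satisfying $Q_T(0)=-\pi$, $Q_T(T)=\pi$. There exists $T_0>0$ such that for every $T\ge T_0$ and every continuous $f:[-1,T+1]\to\mathbf R$ there exists a unique solution $h$ of $$-\ddot h+\cos(Q_T(t))\,h=f,\qquad h(0)=h(T)=0,$$ on $[-1,T+1]$, and the Green operator $\mathcal G:C^0([-1,T+1])\to C^2([-1,T+1])$, $\mathcal G(f)=h$, satisfies $$\max_{t\in[-1,T+1]}\big(|h(t)|+|\dot h(t)|\big)\le C\max_{t\in[-1,T+1]}|f(t)|$$ for a constant $C>0$ independent of $T$. *)

theory Defs
  imports "HOL-Analysis.Analysis"
begin

text \<open>Q (with derivative Q') is the rotating solution of the pendulum equation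
  q'' = sin q with Q(0) = -pi, Q(T) = pi, T-periodic modulo 2 pi, and with
  positive energy E = q'^2/2 + cos q - 1 > 0 (i.e. above the separatrix).\<close>
definition pendulum_QT :: "real \<Rightarrow> (real \<Rightarrow> real) \<Rightarrow> (real \<Rightarrow> real) \<Rightarrow> bool" where
  "pendulum_QT T Q Q' \<longleftrightarrow>
     (\<forall>t. (Q has_real_derivative Q' t) (at t) \<and> (Q' has_real_derivative sin (Q t)) (at t)) \<and>
     (\<forall>t. Q (t + T) = Q t + 2 * pi \<and> Q' (t + T) = Q' t) \<and>
     (Q' 0)\<^sup>2 / 2 + cos (Q 0) - 1 > 0 \<and>
     Q 0 = - pi \<and> Q T = pi"

definition green_sol ::
  "real \<Rightarrow> (real \<Rightarrow> real) \<Rightarrow> (real \<Rightarrow> real) \<Rightarrow> (real \<Rightarrow> real) \<Rightarrow> (real \<Rightarrow> real) \<Rightarrow> bool" where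
  "green_sol T Q f h h' \<longleftrightarrow>
     (\<exists>h''. \<forall>t\<in>{-1..T+1}.
        (h has_real_derivative h' t) (at t within {-1..T+1}) \<and>
        (h' has_real_derivative h'' t) (at t within {-1..T+1}) \<and>
        - h'' t + cos (Q t) * h t = f t) \<and>
     h 0 = 0 \<and> h T = 0"

end

theory Submission
  imports Defs
begin

(* Q' solves the homogeneous linearised equation -h'' + cos Q h = 0 and has no zero, so the
   Dirichlet problem is solved by reduction of order, h = Q' g.  For the estimate, positive energy
   (Q'^2 > 2 - 2 cos Q) and |Q| <= pi on [0, T] make p = 10 - Q^2 a positive barrier with
   -p'' + cos Q p >= 1/20, so the maximum principle gives |h| <= 200 max |f| on [0, T] whatever T is.
   Interpolation on unit intervals then bounds h' there, and Gronwall's inequality for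
   h^2 + h'^2 + (max |f|)^2 carries the bound across the unit intervals [-1, 0] and [T, T + 1].
   Uniqueness follows by applying the estimate to the difference of two solutions. *)

lemma real_mvt_within_Icc:
  fixes f :: "real \<Rightarrow> real"
  assumes "a < b" and "\<And>x. x \<in> {a..b} \<Longrightarrow> (f has_real_derivative f' x) (at x within {a..b})"
  shows "\<exists>x\<in>{a<..<b}. f b - f a = f' x * (b - a)"
  using mvt_simple[of a b f "\<lambda>x y. f' x * y"] assms
  by (auto simp: has_field_derivative_def)

lemma deriv_nonpos_imp_decreasing_Icc:
  fixes W :: "real \<Rightarrow> real"
  assumes "x \<le> y"
    and "\<And>z. z \<in> {x..y} \<Longrightarrow> (W has_real_derivative W' z) (at z within {x..y})"
    and "\<And>z. z \<in> {x..y} \<Longrightarrow> W' z \<le> 0"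
  shows "W y \<le> W x"
proof (cases "x = y")
  case False
  then have "\<exists>z\<in>{x<..<y}. W y - W x = W' z * (y - x)"
    using assms by (intro real_mvt_within_Icc) auto
  then obtain z where "z \<in> {x<..<y}" "W y - W x = W' z * (y - x)" ..
  then show ?thesis
    using assms(1) assms(3)[of z] mult_nonpos_nonneg[of "W' z" "y - x"] by auto
qed simp

lemma interior_min_imp_second_deriv_nonneg:
  fixes v :: "real \<Rightarrow> real"
  assumes x: "a < x" "x < b"
    and v: "\<And>y. y \<in> {a..b} \<Longrightarrow> (v has_real_derivative v' y) (at y within {a..b})"
    and v': "(v' has_real_derivative v'') (at x within {a..b})"
    and min: "\<And>y. y \<in> {a..b} \<Longrightarrow> v x \<le> v y"
  shows "0 \<le> v''"
proof (rule ccontr)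
  assume "\<not> 0 \<le> v''"
  have "v' x = 0"
  proof (rule DERIV_local_min)
    show "(v has_real_derivative v' x) (at x)"
      using v[of x] x at_within_Icc_at[OF x] by simp
    show "\<forall>y. \<bar>x - y\<bar> < min (x - a) (b - x) \<longrightarrow> v x \<le> v y"
      using min by (auto simp: abs_less_iff)
  qed (use x in simp)
  obtain d where "d > 0" and d: "\<And>e. 0 < e \<Longrightarrow> x + e \<in> {a..b} \<Longrightarrow> e < d \<Longrightarrow> v' (x + e) < 0"
    using has_real_derivative_neg_dec_right[OF v'] \<open>\<not> 0 \<le> v''\<close> \<open>v' x = 0\<close> by auto
  define y where "y = x + min d (b - x) / 2"
  have y: "x < y" "y \<le> b" "y - x < d"
    using \<open>d > 0\<close> x unfolding y_def by (auto simp: min_def field_simps)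
  have "(v has_real_derivative v' s) (at s within {x..y})" if "s \<in> {x..y}" for s
    using v[of s] that x y by (auto intro: has_field_derivative_subset)
  then obtain z where z: "z \<in> {x<..<y}" "v y - v x = v' z * (y - x)"
    using real_mvt_within_Icc[of x y v v'] y by blast
  have "v' z < 0"
    using d[of "z - x"] z x y by auto
  then have "v' z * (y - x) < 0"
    using y by (simp add: mult_neg_pos)
  then show False
    using z min[of y] x y by auto
qed

lemma deriv_bound_Icc:
  fixes g :: "real \<Rightarrow> real"
  assumes "0 < l" "a + l \<le> b"
    and g: "\<And>s. s \<in> {a..b} \<Longrightarrow> (g has_real_derivative g' s) (at s within {a..b})"
    and g': "\<And>s. s \<in> {a..b} \<Longrightarrow> (g' has_real_derivative g'' s) (at s within {a..b})"
    and g_le: "\<And>s. s \<in> {a..b} \<Longrightarrow> \<bar>g s\<bar> \<le> A"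
    and g''_le: "\<And>s. s \<in> {a..b} \<Longrightarrow> \<bar>g'' s\<bar> \<le> B"
    and t: "t \<in> {a..b}"
  shows "\<bar>g' t\<bar> \<le> 2 * A / l + B * l"
proof -
  define s where "s = min t (b - l)"
  have s: "a \<le> s" "s + l \<le> b" "s \<le> t" "t \<le> s + l"
    using assms(1,2) t unfolding s_def by (auto simp: min_def)
  have "(g has_real_derivative g' x) (at x within {s..s + l})" if "x \<in> {s..s + l}" for x
    using g[of x] that s by (auto intro: has_field_derivative_subset)
  then obtain z where z: "z \<in> {s<..<s + l}" "g (s + l) - g s = g' z * l"
    using real_mvt_within_Icc[of s "s + l" g g'] \<open>0 < l\<close> by auto
  have "\<bar>g' z\<bar> * l = \<bar>g (s + l) - g s\<bar>"
    using z(2) \<open>0 < l\<close> by (simp add: abs_mult)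
  also have "\<dots> \<le> 2 * A"
    using g_le[of s] g_le[of "s + l"] s abs_triangle_ineq4[of "g (s + l)" "g s"] by simp
  finally have "\<bar>g' z\<bar> * l \<le> 2 * A" .
  then have "\<bar>g' z\<bar> \<le> 2 * A / l"
    using \<open>0 < l\<close> by (simp add: pos_le_divide_eq)
  moreover have "\<bar>g' t - g' z\<bar> \<le> B * \<bar>t - z\<bar>"
    using field_differentiable_bound[of "{a..b}" g' g'' B t z] g' g''_le t z s by auto
  moreover have "B * \<bar>t - z\<bar> \<le> B * l"
    using z s g''_le[OF t] by (intro mult_left_mono) auto
  ultimately show ?thesis
    by linarith
qed

lemma gronwall_Icc:
  fixes V :: "real \<Rightarrow> real"
  assumes V: "\<And>x. x \<in> {a..b} \<Longrightarrow> (V has_real_derivative V' x) (at x within {a..b})"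
    and V'_le: "\<And>x. x \<in> {a..b} \<Longrightarrow> \<bar>V' x\<bar> \<le> L * V x"
    and s: "s \<in> {a..b}" and t: "t \<in> {a..b}"
  shows "V t \<le> exp (L * \<bar>t - s\<bar>) * V s"
proof (cases "s \<le> t")
  case True
  have "V t * exp (- L * t) \<le> V s * exp (- L * s)"
  proof (rule deriv_nonpos_imp_decreasing_Icc[OF True, where W = "\<lambda>x. V x * exp (- L * x)"])
    show "((\<lambda>x. V x * exp (- L * x)) has_real_derivative (V' x - L * V x) * exp (- L * x))
        (at x within {s..t})" if "x \<in> {s..t}" for x
      using V[of x] that s t
      by (auto intro!: derivative_eq_intros intro: has_field_derivative_subset simp: algebra_simps)
    show "(V' x - L * V x) * exp (- L * x) \<le> 0" if "x \<in> {s..t}" for x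
      using V'_le[of x] that s t by (intro mult_nonpos_nonneg) auto
  qed
  then have "V t \<le> V s * exp (- L * s) * exp (L * t)"
    by (simp add: exp_minus field_simps)
  then show ?thesis
    using True by (simp add: mult_exp_exp algebra_simps)
next
  case False
  have "- (V s * exp (L * s)) \<le> - (V t * exp (L * t))"
  proof (rule deriv_nonpos_imp_decreasing_Icc[where W = "\<lambda>x. - (V x * exp (L * x))"])
    show "((\<lambda>x. - (V x * exp (L * x))) has_real_derivative - (V' x + L * V x) * exp (L * x))
        (at x within {t..s})" if "x \<in> {t..s}" for x
      using V[of x] that s t
      by (auto intro!: derivative_eq_intros intro: has_field_derivative_subset simp: algebra_simps)
    show "- (V' x + L * V x) * exp (L * x) \<le> 0" if "x \<in> {t..s}" for x
      using V'_le[of x] that s t by (intro mult_nonpos_nonneg) auto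
  qed (use False in simp)
  then have "V t \<le> V s * exp (L * s) * exp (- L * t)"
    by (simp add: exp_minus field_simps)
  then show ?thesis
    using False by (simp add: mult_exp_exp algebra_simps)
qed

lemma continuous_nonvanishing_pos:
  fixes g :: "real \<Rightarrow> real"
  assumes cont: "continuous_on UNIV g" and nz: "\<And>x. g x \<noteq> 0" and "0 < g z"
  shows "0 < g t"
proof (rule ccontr)
  assume "\<not> 0 < g t"
  then have "g t \<le> 0" "0 \<le> g z"
    using \<open>0 < g z\<close> by simp_all
  have "\<exists>x. g x = 0"
  proof (cases "t \<le> z")
    case True
    show ?thesis
      using IVT'[OF \<open>g t \<le> 0\<close> \<open>0 \<le> g z\<close> True continuous_on_subset[OF cont]] by blast
  next
    case False
    then have "z \<le> t"
      by simp
    show ?thesis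
      using IVT2'[OF \<open>g t \<le> 0\<close> \<open>0 \<le> g z\<close> \<open>z \<le> t\<close> continuous_on_subset[OF cont]] by blast
  qed
  then show False
    using nz by blast
qed

lemma continuous_on_abs_le_SUP:
  fixes f :: "real \<Rightarrow> real"
  assumes "continuous_on {a..b} f" and "t \<in> {a..b}"
  shows "\<bar>f t\<bar> \<le> (SUP s\<in>{a..b}. \<bar>f s\<bar>)"
proof (rule cSUP_upper[OF assms(2)])
  have "compact ((\<lambda>s. \<bar>f s\<bar>) ` {a..b})"
    using assms(1) by (intro compact_continuous_image continuous_intros) auto
  then show "bdd_above ((\<lambda>s. \<bar>f s\<bar>) ` {a..b})"
    by (intro bounded_imp_bdd_above compact_imp_bounded)
qed

section \<open>Linear equations -h'' + c h = f\<close>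

definition ode2_solution ::
  "real set \<Rightarrow> (real \<Rightarrow> real) \<Rightarrow> (real \<Rightarrow> real) \<Rightarrow> (real \<Rightarrow> real) \<Rightarrow> (real \<Rightarrow> real) \<Rightarrow> (real \<Rightarrow> real) \<Rightarrow> bool"
  where
  "ode2_solution S c f h h' h'' \<longleftrightarrow>
     (\<forall>t\<in>S. (h has_real_derivative h' t) (at t within S) \<and>
            (h' has_real_derivative h'' t) (at t within S) \<and> - h'' t + c t * h t = f t)"

lemma ode2_solution_subset:
  "ode2_solution S c f h h' h'' \<Longrightarrow> S' \<subseteq> S \<Longrightarrow> ode2_solution S' c f h h' h''"
  unfolding ode2_solution_def by (auto intro: has_field_derivative_subset)

lemma ode2_solution_lincomb:
  assumes "ode2_solution S c f1 h1 h1' h1''" and "ode2_solution S c f2 h2 h2' h2''"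
  shows "ode2_solution S c (\<lambda>t. \<alpha> * f1 t + \<beta> * f2 t) (\<lambda>t. \<alpha> * h1 t + \<beta> * h2 t)
           (\<lambda>t. \<alpha> * h1' t + \<beta> * h2' t) (\<lambda>t. \<alpha> * h1'' t + \<beta> * h2'' t)"
  using assms unfolding ode2_solution_def
  by (force intro!: derivative_eq_intros simp: algebra_simps)

lemma ode2_solution_continuous_on:
  "ode2_solution S c f h h' h'' \<Longrightarrow> continuous_on S h"
  unfolding ode2_solution_def by (auto intro!: DERIV_continuous_on[of S h h'])

lemma ode2_maximum_principle:
  assumes u: "ode2_solution {a..b} c g u u' u''"
    and p: "ode2_solution {a..b} c q p p' p''"
    and p_pos: "\<And>s. s \<in> {a..b} \<Longrightarrow> 0 < p s"
    and g_nonneg: "\<And>s. s \<in> {a<..<b} \<Longrightarrow> 0 \<le> g s"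
    and q_pos: "\<And>s. s \<in> {a<..<b} \<Longrightarrow> 0 < q s"
    and "0 \<le> u a" "0 \<le> u b" and t: "t \<in> {a..b}"
  shows "0 \<le> u t"
proof (rule ccontr)
  assume "\<not> 0 \<le> u t"
  have "p s \<noteq> 0" if "s \<in> {a..b}" for s
    using p_pos[OF that] by simp
  then have cont: "continuous_on {a..b} (\<lambda>s. u s / p s)"
    using ode2_solution_continuous_on[OF u] ode2_solution_continuous_on[OF p]
    by (intro continuous_intros) auto
  obtain t0 where t0: "t0 \<in> {a..b}" and min: "\<And>s. s \<in> {a..b} \<Longrightarrow> u t0 / p t0 \<le> u s / p s"
    using continuous_attains_inf[OF compact_Icc _ cont] t by auto
  define k where "k = u t0 / p t0"
  have "u t / p t < 0"
    using \<open>\<not> 0 \<le> u t\<close> p_pos[OF t] by (simp add: divide_neg_pos)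
  then have "k < 0"
    using min[OF t] unfolding k_def by linarith
  have "t0 \<noteq> a" "t0 \<noteq> b"
    using \<open>k < 0\<close> \<open>0 \<le> u a\<close> \<open>0 \<le> u b\<close> p_pos[of a] p_pos[of b] t0 unfolding k_def
    by (auto dest: divide_nonneg_pos)
  then have t0_int: "a < t0" "t0 < b"
    using t0 by auto
  \<comment> \<open>v is nonnegative and touches zero at the interior point t0, yet v'' t0 < 0\<close>
  define v where "v s = u s - k * p s" for s
  define v' where "v' s = u' s - k * p' s" for s
  define v'' where "v'' s = u'' s - k * p'' s" for s
  have v: "ode2_solution {a..b} c (\<lambda>s. g s - k * q s) v v' v''"
    using ode2_solution_lincomb[OF u p, of 1 "- k"] unfolding v_def v'_def v''_def by simp
  have v_nonneg: "0 \<le> v s" if "s \<in> {a..b}" for s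
    using min[OF that] p_pos[OF that] unfolding v_def k_def by (simp add: pos_le_divide_eq)
  have "v t0 = 0"
    using p_pos[OF t0] unfolding v_def k_def by simp
  have "0 \<le> v'' t0"
    by (rule interior_min_imp_second_deriv_nonneg[OF t0_int, of v v'])
      (use v t0 v_nonneg \<open>v t0 = 0\<close> in \<open>auto simp: ode2_solution_def\<close>)
  moreover have "- v'' t0 + c t0 * v t0 = g t0 - k * q t0"
    using v t0 unfolding ode2_solution_def by blast
  moreover have "k * q t0 < 0"
    using \<open>k < 0\<close> q_pos t0_int by (simp add: mult_neg_pos)
  ultimately show False
    using \<open>v t0 = 0\<close> g_nonneg[of t0] t0_int by simp
qed

lemma ode2_barrier_bound:
  assumes h: "ode2_solution {a..b} c f h h' h''"
    and p: "ode2_solution {a..b} c q p p' p''"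
    and p_pos: "\<And>s. s \<in> {a..b} \<Longrightarrow> 0 < p s"
    and q_pos: "\<And>s. s \<in> {a<..<b} \<Longrightarrow> 0 < q s"
    and f_le: "\<And>s. s \<in> {a<..<b} \<Longrightarrow> \<bar>f s\<bar> \<le> M * q s"
    and "\<bar>h a\<bar> \<le> M * p a" "\<bar>h b\<bar> \<le> M * p b" and t: "t \<in> {a..b}"
  shows "\<bar>h t\<bar> \<le> M * p t"
proof -
  have "0 \<le> M * p t + \<sigma> * h t" if "\<bar>\<sigma>\<bar> = 1" for \<sigma>
  proof (rule ode2_maximum_principle[OF ode2_solution_lincomb[OF p h] p p_pos _ q_pos _ _ t])
    show "0 \<le> M * q s + \<sigma> * f s" if "s \<in> {a<..<b}" for s
      using f_le[OF that] \<open>\<bar>\<sigma>\<bar> = 1\<close> by (auto simp: abs_if split: if_splits)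
    show "0 \<le> M * p a + \<sigma> * h a" "0 \<le> M * p b + \<sigma> * h b"
      using assms(6,7) \<open>\<bar>\<sigma>\<bar> = 1\<close> by (auto simp: abs_if split: if_splits)
  qed
  from this[of 1] this[of "- 1"] show ?thesis
    by simp
qed

lemma energy_deriv_le:
  fixes x y c f F :: real
  assumes "\<bar>c\<bar> \<le> 1" and "\<bar>f\<bar> \<le> F"
  shows "\<bar>2 * x * y + 2 * y * (c * x - f)\<bar> \<le> 3 * (x\<^sup>2 + y\<^sup>2 + F\<^sup>2)"
proof -
  have "\<bar>2 * x * y * (1 + c)\<bar> \<le> 2 * (x\<^sup>2 + y\<^sup>2)"
  proof -
    have "\<bar>2 * x * y * (1 + c)\<bar> \<le> \<bar>2 * x * y\<bar> * 2"
      using assms(1) unfolding abs_mult[of "2 * x * y"] by (intro mult_left_mono) auto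
    also have "\<dots> \<le> 2 * (x\<^sup>2 + y\<^sup>2)"
      using sum_squares_bound[of "\<bar>x\<bar>" "\<bar>y\<bar>"] by (simp add: abs_mult)
    finally show ?thesis .
  qed
  moreover have "\<bar>2 * y * f\<bar> \<le> y\<^sup>2 + F\<^sup>2"
  proof -
    have "\<bar>2 * y * f\<bar> \<le> 2 * \<bar>y\<bar> * F"
      using assms(2) by (simp add: abs_mult mult_left_mono)
    also have "\<dots> \<le> y\<^sup>2 + F\<^sup>2"
      using sum_squares_bound[of "\<bar>y\<bar>" F] by simp
    finally show ?thesis .
  qed
  moreover have "2 * x * y + 2 * y * (c * x - f) = 2 * x * y * (1 + c) - 2 * y * f"
    by (simp add: algebra_simps)
  ultimately show ?thesis
    by (smt (verit) zero_le_power2)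
qed

lemma ode2_energy_growth:
  assumes h: "ode2_solution {a..b} c f h h' h''"
    and c_le: "\<And>s. s \<in> {a..b} \<Longrightarrow> \<bar>c s\<bar> \<le> 1"
    and f_le: "\<And>s. s \<in> {a..b} \<Longrightarrow> \<bar>f s\<bar> \<le> F"
    and "s \<in> {a..b}" "t \<in> {a..b}"
  shows "(h t)\<^sup>2 + (h' t)\<^sup>2 + F\<^sup>2 \<le> exp (3 * \<bar>t - s\<bar>) * ((h s)\<^sup>2 + (h' s)\<^sup>2 + F\<^sup>2)"
proof (rule gronwall_Icc[where V = "\<lambda>x. (h x)\<^sup>2 + (h' x)\<^sup>2 + F\<^sup>2"])
  fix x assume x: "x \<in> {a..b}"
  then have "h'' x = c x * h x - f x"
    using h unfolding ode2_solution_def by force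
  then show "\<bar>2 * h x * h' x + 2 * h' x * h'' x\<bar> \<le> 3 * ((h x)\<^sup>2 + (h' x)\<^sup>2 + F\<^sup>2)"
    using energy_deriv_le[OF c_le f_le] x by simp
  show "((\<lambda>x. (h x)\<^sup>2 + (h' x)\<^sup>2 + F\<^sup>2) has_real_derivative 2 * h x * h' x + 2 * h' x * h'' x)
      (at x within {a..b})"
    using h x unfolding ode2_solution_def by (auto intro!: derivative_eq_intros)
qed (use assms in auto)

lemma ode2_reduction_of_order:
  assumes w: "ode2_solution S c (\<lambda>_. 0) w w' w''"
    and w_nz: "\<And>t. t \<in> S \<Longrightarrow> w t \<noteq> 0"
    and \<Phi>: "\<And>t. t \<in> S \<Longrightarrow> (\<Phi> has_real_derivative w t * f t) (at t within S)"
    and g: "\<And>t. t \<in> S \<Longrightarrow> (g has_real_derivative (C - \<Phi> t) / (w t)\<^sup>2) (at t within S)"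
  shows "ode2_solution S c f (\<lambda>t. w t * g t) (\<lambda>t. w' t * g t + (C - \<Phi> t) / w t)
           (\<lambda>t. c t * w t * g t - f t)"
  unfolding ode2_solution_def
proof (intro ballI conjI)
  fix t assume t: "t \<in> S"
  have w_t: "(w has_real_derivative w' t) (at t within S)" "(w' has_real_derivative c t * w t) (at t within S)"
    using w t unfolding ode2_solution_def by auto
  show "((\<lambda>t. w t * g t) has_real_derivative w' t * g t + (C - \<Phi> t) / w t) (at t within S)"
    using w_t(1) g[OF t] w_nz[OF t]
    by (auto intro!: derivative_eq_intros simp: field_simps power2_eq_square)
  show "((\<lambda>t. w' t * g t + (C - \<Phi> t) / w t) has_real_derivative c t * w t * g t - f t) (at t within S)"
    using w_t g[OF t] \<Phi>[OF t] w_nz[OF t]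
    by (auto intro!: derivative_eq_intros simp: field_simps power2_eq_square)
  show "- (c t * w t * g t - f t) + c t * (w t * g t) = f t"
    by simp
qed

lemma ode2_dirichlet_solvable:
  assumes w: "ode2_solution {a..b} c (\<lambda>_. 0) w w' w''"
    and w_nz: "\<And>t. t \<in> {a..b} \<Longrightarrow> w t \<noteq> 0"
    and f: "continuous_on {a..b} f"
    and s: "s0 \<in> {a..b}" "s1 \<in> {a..b}" "s0 < s1"
  shows "\<exists>h h' h''. ode2_solution {a..b} c f h h' h'' \<and> h s0 = 0 \<and> h s1 = 0"
proof -
  have cont_w: "continuous_on {a..b} w"
    using ode2_solution_continuous_on[OF w] .
  define \<Phi> where "\<Phi> t = integral {a..t} (\<lambda>s. w s * f s)" for t
  define K where "K t = integral {a..t} (\<lambda>s. 1 / (w s)\<^sup>2)" for t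
  define P where "P t = integral {a..t} (\<lambda>s. \<Phi> s / (w s)\<^sup>2)" for t
  have \<Phi>_deriv: "(\<Phi> has_real_derivative w t * f t) (at t within {a..b})" if "t \<in> {a..b}" for t
    unfolding \<Phi>_def by (rule integral_has_real_derivative) (use cont_w f that in \<open>auto intro!: continuous_intros\<close>)
  have cont_\<Phi>: "continuous_on {a..b} \<Phi>"
    using \<Phi>_deriv by (rule DERIV_continuous_on)
  have K_deriv: "(K has_real_derivative 1 / (w t)\<^sup>2) (at t within {a..b})" if "t \<in> {a..b}" for t
    unfolding K_def by (rule integral_has_real_derivative) (use cont_w w_nz that in \<open>auto intro!: continuous_intros\<close>)
  have P_deriv: "(P has_real_derivative \<Phi> t / (w t)\<^sup>2) (at t within {a..b})" if "t \<in> {a..b}" for t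
    unfolding P_def by (rule integral_has_real_derivative) (use cont_w cont_\<Phi> w_nz that in \<open>auto intro!: continuous_intros\<close>)
  have "K s1 - K s0 > 0"
  proof -
    have "(K has_real_derivative 1 / (w t)\<^sup>2) (at t within {s0..s1})" if "t \<in> {s0..s1}" for t
      using K_deriv[of t] that s by (auto intro: has_field_derivative_subset)
    then obtain z where "z \<in> {s0<..<s1}" "K s1 - K s0 = 1 / (w z)\<^sup>2 * (s1 - s0)"
      using real_mvt_within_Icc[of s0 s1 K "\<lambda>t. 1 / (w t)\<^sup>2"] s by blast
    moreover have "w z \<noteq> 0"
      using w_nz \<open>z \<in> {s0<..<s1}\<close> s by auto
    ultimately show ?thesis
      using s by simp
  qed
  define C where "C = (P s1 - P s0) / (K s1 - K s0)"
  define g where "g t = C * (K t - K s0) - (P t - P s0)" for t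
  have "(g has_real_derivative (C - \<Phi> t) / (w t)\<^sup>2) (at t within {a..b})" if "t \<in> {a..b}" for t
    unfolding g_def using K_deriv[OF that] P_deriv[OF that]
    by (auto intro!: derivative_eq_intros simp: diff_divide_distrib)
  then have "ode2_solution {a..b} c f (\<lambda>t. w t * g t) (\<lambda>t. w' t * g t + (C - \<Phi> t) / w t)
      (\<lambda>t. c t * w t * g t - f t)"
    using ode2_reduction_of_order[OF w w_nz \<Phi>_deriv, of g C] by blast
  moreover have "g s0 = 0" "g s1 = 0"
    using \<open>K s1 - K s0 > 0\<close> unfolding g_def C_def by simp_all
  ultimately show ?thesis
    by (metis mult_zero_right)
qed

section \<open>The rotating pendulum orbit\<close>

lemma pendulum_QT_has_derivatives:
  assumes "pendulum_QT T Q Q'"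
  shows "(Q has_real_derivative Q' t) (at t)" and "(Q' has_real_derivative sin (Q t)) (at t)"
  using assms unfolding pendulum_QT_def by auto

lemma pendulum_QT_energy:
  assumes "pendulum_QT T Q Q'"
  shows "2 - 2 * cos (Q t) < (Q' t)\<^sup>2"
proof -
  define E where "E s = (Q' s)\<^sup>2 / 2 + cos (Q s) - 1" for s
  have "(E has_real_derivative 0) (at s)" for s
    unfolding E_def using pendulum_QT_has_derivatives[OF assms]
    by (auto intro!: derivative_eq_intros)
  then have "E t = E 0"
    by (intro DERIV_isconst_all) auto
  moreover have "0 < E 0"
    using assms unfolding pendulum_QT_def E_def by blast
  ultimately show ?thesis
    unfolding E_def by simp
qed

lemma pendulum_QT_deriv_pos:
  assumes Q: "pendulum_QT T Q Q'" and "0 < T"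
  shows "0 < Q' t"
proof -
  have cont: "continuous_on UNIV Q'"
    using pendulum_QT_has_derivatives(2)[OF Q]
    by (intro continuous_at_imp_continuous_on ballI DERIV_isCont) auto
  have "0 < (Q' s)\<^sup>2" for s
    using pendulum_QT_energy[OF Q, of s] cos_le_one[of "Q s"] by linarith
  then have nz: "Q' s \<noteq> 0" for s
    by (metis zero_less_power2)
  obtain z where "Q T - Q 0 = (T - 0) * Q' z"
    using MVT2[of 0 T Q Q'] \<open>0 < T\<close> pendulum_QT_has_derivatives(1)[OF Q] by blast
  then have "2 * pi = T * Q' z"
    using Q unfolding pendulum_QT_def by simp
  then have "0 < T * Q' z"
    using pi_gt_zero by linarith
  then have "0 < Q' z"
    using \<open>0 < T\<close> by (simp add: zero_less_mult_iff)
  then show ?thesis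
    using continuous_nonvanishing_pos[OF cont nz] by blast
qed

lemma pendulum_QT_range:
  assumes Q: "pendulum_QT T Q Q'" and "0 < T" and t: "t \<in> {0..T}"
  shows "\<bar>Q t\<bar> \<le> pi"
proof -
  have cont: "continuous_on A Q" for A
    using pendulum_QT_has_derivatives(1)[OF Q]
    by (intro continuous_at_imp_continuous_on ballI DERIV_isCont) auto
  have mono: "Q x \<le> Q y" if "x \<le> y" for x y
  proof (rule DERIV_nonneg_imp_increasing_open[OF that _ cont])
    show "\<exists>d. (Q has_real_derivative d) (at s) \<and> 0 \<le> d" for s
      using pendulum_QT_has_derivatives(1)[OF Q] pendulum_QT_deriv_pos[OF Q \<open>0 < T\<close>]
      by (blast intro: less_imp_le)
  qed
  have "Q 0 = - pi" "Q T = pi"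
    using Q unfolding pendulum_QT_def by simp_all
  then show ?thesis
    using mono[of 0 t] mono[of t T] t by auto
qed

lemma pendulum_QT_linearized_solution:
  assumes "pendulum_QT T Q Q'"
  shows "ode2_solution S (\<lambda>t. cos (Q t)) (\<lambda>_. 0) Q' (\<lambda>t. sin (Q t)) (\<lambda>t. cos (Q t) * Q' t)"
  unfolding ode2_solution_def
  using pendulum_QT_has_derivatives[OF assms]
  by (auto intro!: derivative_eq_intros intro: has_field_derivative_at_within)

lemma pi_squared_bounds: "9 \<le> pi\<^sup>2" "pi\<^sup>2 \<le> 199 / 20"
proof -
  have "(3::real)\<^sup>2 \<le> pi\<^sup>2"
    using pi_gt3 by (intro power_mono) auto
  then show "9 \<le> pi\<^sup>2"
    by simp
  have "pi\<^sup>2 \<le> 3.15\<^sup>2"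
    using pi_approx(2) by (intro power_mono) auto
  also have "\<dots> \<le> 199 / 20"
    by (simp add: power2_eq_square)
  finally show "pi\<^sup>2 \<le> 199 / 20" .
qed

lemma cos_sin_barrier_ineq:
  fixes x :: real
  assumes "\<bar>x\<bar> \<le> pi"
  shows "1/20 \<le> 4 + cos x * (6 - x\<^sup>2) + 2 * x * sin x"
proof -
  have "x * sin x = \<bar>x\<bar> * sin \<bar>x\<bar>"
    by (simp add: abs_if)
  then have x_sin: "0 \<le> x * sin x"
    using assms by (simp add: sin_ge_zero)
  have "x\<^sup>2 \<le> pi\<^sup>2"
    using assms by (simp flip: abs_le_square_iff)
  show ?thesis
  proof (cases "\<bar>x\<bar> \<le> pi / 2")
    case True
    then have "0 \<le> cos x"
      by (intro cos_ge_zero) auto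
    moreover have "x\<^sup>2 \<le> (pi / 2)\<^sup>2"
      using True by (simp flip: abs_le_square_iff)
    then have "x\<^sup>2 \<le> 6"
      using pi_squared_bounds by (simp add: power_divide)
    ultimately have "0 \<le> cos x * (6 - x\<^sup>2)"
      by simp
    then show ?thesis
      using x_sin by linarith
  next
    case False
    then have "(pi / 2)\<^sup>2 \<le> x\<^sup>2"
      by (simp flip: abs_le_square_iff)
    then have "9 / 4 \<le> x\<^sup>2"
      using pi_squared_bounds by (simp add: power_divide)
    then have "\<bar>6 - x\<^sup>2\<bar> \<le> 79 / 20"
      using \<open>x\<^sup>2 \<le> pi\<^sup>2\<close> pi_squared_bounds unfolding abs_le_iff by linarith
    then have "\<bar>cos x * (6 - x\<^sup>2)\<bar> \<le> 1 * (79 / 20)"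
      unfolding abs_mult by (intro mult_mono) auto
    then show ?thesis
      using x_sin by (simp add: abs_le_iff)
  qed
qed

lemma pendulum_barrier:
  assumes Q: "pendulum_QT T Q Q'" and "0 < T"
  obtains q p p' p'' where "ode2_solution {0..T} (\<lambda>t. cos (Q t)) q p p' p''"
    and "\<And>t. t \<in> {0..T} \<Longrightarrow> 0 < p t \<and> p t \<le> 10"
    and "\<And>t. t \<in> {0..T} \<Longrightarrow> 1/20 \<le> q t"
proof
  let ?p = "\<lambda>t. 10 - (Q t)\<^sup>2"
  let ?p' = "\<lambda>t. - 2 * Q t * Q' t"
  let ?p'' = "\<lambda>t. - 2 * ((Q' t)\<^sup>2 + Q t * sin (Q t))"
  show "ode2_solution {0..T} (\<lambda>t. cos (Q t)) (\<lambda>t. - ?p'' t + cos (Q t) * ?p t) ?p ?p' ?p''"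
    unfolding ode2_solution_def using pendulum_QT_has_derivatives[OF Q]
    by (auto intro!: derivative_eq_intros intro: has_field_derivative_at_within
        simp: power2_eq_square algebra_simps)
  fix t assume t: "t \<in> {0..T}"
  have "\<bar>Q t\<bar> \<le> pi"
    using pendulum_QT_range[OF Q \<open>0 < T\<close> t] .
  then have "(Q t)\<^sup>2 \<le> pi\<^sup>2"
    by (simp flip: abs_le_square_iff)
  then show "0 < ?p t \<and> ?p t \<le> 10"
    using pi_squared_bounds by simp
  have "1/20 \<le> 4 + cos (Q t) * (6 - (Q t)\<^sup>2) + 2 * Q t * sin (Q t)"
    using cos_sin_barrier_ineq[OF \<open>\<bar>Q t\<bar> \<le> pi\<close>] .
  also have "\<dots> \<le> 4 + cos (Q t) * (6 - (Q t)\<^sup>2) + 2 * Q t * sin (Q t) + 2 * ((Q' t)\<^sup>2 - (2 - 2 * cos (Q t)))"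
    using pendulum_QT_energy[OF Q, of t] by simp
  also have "\<dots> = - ?p'' t + cos (Q t) * ?p t"
    by (simp add: algebra_simps)
  finally show "1/20 \<le> - ?p'' t + cos (Q t) * ?p t" .
qed

lemma pendulum_dirichlet_bound:
  assumes Q: "pendulum_QT T Q Q'" and "1 \<le> T"
    and h: "ode2_solution {0..T} (\<lambda>t. cos (Q t)) f h h' h''" and "h 0 = 0" "h T = 0"
    and f_le: "\<And>s. s \<in> {0..T} \<Longrightarrow> \<bar>f s\<bar> \<le> F"
    and t: "t \<in> {0..T}"
  shows "\<bar>h t\<bar> \<le> 200 * F" and "\<bar>h' t\<bar> \<le> 601 * F"
proof -
  have "0 < T"
    using \<open>1 \<le> T\<close> by simp
  obtain q p p' p'' where p: "ode2_solution {0..T} (\<lambda>t. cos (Q t)) q p p' p''"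
    and p_bounds: "\<And>s. s \<in> {0..T} \<Longrightarrow> 0 < p s \<and> p s \<le> 10"
    and q_ge: "\<And>s. s \<in> {0..T} \<Longrightarrow> 1/20 \<le> q s"
    by (erule pendulum_barrier[OF Q \<open>0 < T\<close>])
  have "0 \<le> F"
    using f_le[of 0] \<open>1 \<le> T\<close> by simp
  have h_le: "\<bar>h s\<bar> \<le> 200 * F" if s: "s \<in> {0..T}" for s
  proof -
    have "\<bar>h s\<bar> \<le> 20 * F * p s"
    proof (rule ode2_barrier_bound[OF h p _ _ _ _ _ s])
      show "\<bar>f x\<bar> \<le> 20 * F * q x" if "x \<in> {0<..<T}" for x
        using f_le[of x] q_ge[of x] that \<open>0 \<le> F\<close> mult_left_mono[of "1/20" "q x" "20 * F"] by auto
      show "0 < q x" if "x \<in> {0<..<T}" for x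
        using q_ge[of x] that by auto
      show "\<bar>h 0\<bar> \<le> 20 * F * p 0" "\<bar>h T\<bar> \<le> 20 * F * p T"
        using \<open>h 0 = 0\<close> \<open>h T = 0\<close> \<open>0 \<le> F\<close> p_bounds[of 0] p_bounds[of T] \<open>1 \<le> T\<close> by auto
    qed (use p_bounds in auto)
    also have "\<dots> \<le> 20 * F * 10"
      using p_bounds[OF s] \<open>0 \<le> F\<close> by (intro mult_left_mono) auto
    finally show ?thesis
      by simp
  qed
  show "\<bar>h t\<bar> \<le> 200 * F"
    using h_le[OF t] .
  have h''_le: "\<bar>h'' s\<bar> \<le> 201 * F" if s: "s \<in> {0..T}" for s
  proof -
    have "h'' s = cos (Q s) * h s - f s"
      using h s unfolding ode2_solution_def by force
    moreover have "\<bar>cos (Q s) * h s\<bar> \<le> 1 * (200 * F)"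
      unfolding abs_mult using h_le[OF s] by (intro mult_mono) auto
    ultimately show ?thesis
      using f_le[OF s] by linarith
  qed
  have "\<bar>h' t\<bar> \<le> 2 * (200 * F) / 1 + 201 * F * 1"
    using deriv_bound_Icc[of 1 0 T h h' h'' "200 * F" "201 * F" t] h h_le h''_le t \<open>1 \<le> T\<close>
    unfolding ode2_solution_def by auto
  then show "\<bar>h' t\<bar> \<le> 601 * F"
    by simp
qed

section \<open>The Green operator\<close>

lemma green_sol_iff_ode2_solution:
  "green_sol T Q f h h' \<longleftrightarrow>
     (\<exists>h''. ode2_solution {-1..T+1} (\<lambda>t. cos (Q t)) f h h' h'') \<and> h 0 = 0 \<and> h T = 0"
  unfolding green_sol_def ode2_solution_def by blast

lemma pendulum_energy_bound:
  assumes Q: "pendulum_QT T Q Q'" and "1 \<le> T"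
    and h: "ode2_solution {-1..T+1} (\<lambda>t. cos (Q t)) f h h' h''" and "h 0 = 0" "h T = 0"
    and f_le: "\<And>s. s \<in> {-1..T+1} \<Longrightarrow> \<bar>f s\<bar> \<le> F"
    and t: "t \<in> {-1..T+1}"
  shows "(h t)\<^sup>2 + (h' t)\<^sup>2 + F\<^sup>2 \<le> exp 3 * (401202 * F\<^sup>2)"
proof -
  define s where "s = max 0 (min t T)"
  have s: "s \<in> {0..T}" "\<bar>t - s\<bar> \<le> 1"
    using t \<open>1 \<le> T\<close> unfolding s_def by auto
  have hs: "\<bar>h s\<bar> \<le> 200 * F" and h's: "\<bar>h' s\<bar> \<le> 601 * F"
    using pendulum_dirichlet_bound[OF Q \<open>1 \<le> T\<close> ode2_solution_subset[OF h] \<open>h 0 = 0\<close> \<open>h T = 0\<close> _ s(1)]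
      f_le by auto
  have "(h s)\<^sup>2 + (h' s)\<^sup>2 + F\<^sup>2 \<le> (200 * F)\<^sup>2 + (601 * F)\<^sup>2 + F\<^sup>2"
    using power_mono[OF hs abs_ge_zero, of 2] power_mono[OF h's abs_ge_zero, of 2] by simp
  also have "\<dots> = 401202 * F\<^sup>2"
    by (simp add: power_mult_distrib)
  finally have energy_s: "(h s)\<^sup>2 + (h' s)\<^sup>2 + F\<^sup>2 \<le> 401202 * F\<^sup>2" .
  have "(h t)\<^sup>2 + (h' t)\<^sup>2 + F\<^sup>2 \<le> exp (3 * \<bar>t - s\<bar>) * ((h s)\<^sup>2 + (h' s)\<^sup>2 + F\<^sup>2)"
    using ode2_energy_growth[OF h _ f_le, where s = s and t = t] s t \<open>1 \<le> T\<close> by simp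
  also have "\<dots> \<le> exp 3 * (401202 * F\<^sup>2)"
    by (rule mult_mono) (use s energy_s in auto)
  finally show ?thesis .
qed

lemma green_sol_bound:
  assumes Q: "pendulum_QT T Q Q'" and "1 \<le> T"
    and f: "continuous_on {-1..T+1} f" and sol: "green_sol T Q f h h'" and t: "t \<in> {-1..T+1}"
  shows "\<bar>h t\<bar> + \<bar>h' t\<bar> \<le> 1000 * exp 3 * (SUP s\<in>{-1..T+1}. \<bar>f s\<bar>)"
proof -
  define F where "F = (SUP s\<in>{-1..T+1}. \<bar>f s\<bar>)"
  obtain h'' where h: "ode2_solution {-1..T+1} (\<lambda>t. cos (Q t)) f h h' h''" and "h 0 = 0" "h T = 0"
    using sol unfolding green_sol_iff_ode2_solution by blast
  have f_le: "\<bar>f s\<bar> \<le> F" if "s \<in> {-1..T+1}" for s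
    unfolding F_def using continuous_on_abs_le_SUP[OF f that] .
  have "\<bar>f 0\<bar> \<le> F"
    using f_le \<open>1 \<le> T\<close> by simp
  then have "0 \<le> F"
    by (rule order_trans[OF abs_ge_zero])
  have "(\<bar>h t\<bar> + \<bar>h' t\<bar>)\<^sup>2 \<le> 2 * ((h t)\<^sup>2 + (h' t)\<^sup>2)"
    using sum_squares_bound[of "\<bar>h t\<bar>" "\<bar>h' t\<bar>"] by (simp add: power2_sum)
  also have "\<dots> \<le> 2 * ((h t)\<^sup>2 + (h' t)\<^sup>2 + F\<^sup>2)"
    by simp
  also have "\<dots> \<le> 2 * (exp 3 * (401202 * F\<^sup>2))"
    using pendulum_energy_bound[OF Q \<open>1 \<le> T\<close> h \<open>h 0 = 0\<close> \<open>h T = 0\<close> f_le t] by simp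
  also have "\<dots> = 802404 * (exp 3 * F\<^sup>2)"
    by simp
  also have "\<dots> \<le> 1000000 * (exp 3 * (exp 3 * F\<^sup>2))"
    using mult_nonneg_nonneg[OF _ zero_le_power2, of "exp 3" F]
    by (intro mult_mono) (auto simp: mult_le_cancel_right1)
  also have "\<dots> = (1000 * exp 3 * F)\<^sup>2"
    by algebra
  finally show ?thesis
    unfolding F_def[symmetric] by (rule power2_le_imp_le) (use \<open>0 \<le> F\<close> in simp)
qed

lemma green_sol_diff:
  assumes "green_sol T Q f h1 h1'" and "green_sol T Q f h2 h2'"
  shows "green_sol T Q (\<lambda>_. 0) (\<lambda>t. h1 t - h2 t) (\<lambda>t. h1' t - h2' t)"
proof -
  obtain h1'' h2'' where "ode2_solution {-1..T+1} (\<lambda>t. cos (Q t)) f h1 h1' h1''"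
    and "ode2_solution {-1..T+1} (\<lambda>t. cos (Q t)) f h2 h2' h2''"
    and "h1 0 = 0" "h1 T = 0" "h2 0 = 0" "h2 T = 0"
    using assms unfolding green_sol_iff_ode2_solution by blast
  from ode2_solution_lincomb[OF this(1,2), of 1 "- 1"] this(3-)
  show ?thesis
    unfolding green_sol_iff_ode2_solution by auto
qed

lemma green_sol_unique:
  assumes "pendulum_QT T Q Q'" and "1 \<le> T"
    and "green_sol T Q f h1 h1'" and "green_sol T Q f h2 h2'" and t: "t \<in> {-1..T+1}"
  shows "h1 t = h2 t"
proof -
  have "\<bar>h1 t - h2 t\<bar> + \<bar>h1' t - h2' t\<bar> \<le> 1000 * exp 3 * (SUP s\<in>{-1..T+1}. \<bar>0::real\<bar>)"
    using green_sol_bound[OF assms(1,2) _ green_sol_diff[OF assms(3,4)] t] by simp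
  also have "\<dots> = 0"
    using \<open>1 \<le> T\<close> by simp
  finally show ?thesis
    by simp
qed

lemma green_sol_exists:
  assumes Q: "pendulum_QT T Q Q'" and "0 < T" and f: "continuous_on {-1..T+1} f"
  shows "\<exists>h h'. green_sol T Q f h h'"
proof -
  have "\<exists>h h' h''. ode2_solution {-1..T+1} (\<lambda>t. cos (Q t)) f h h' h'' \<and> h 0 = 0 \<and> h T = 0"
    using ode2_dirichlet_solvable[OF pendulum_QT_linearized_solution[OF Q] _ f]
      pendulum_QT_deriv_pos[OF Q \<open>0 < T\<close>] \<open>0 < T\<close> by (simp add: less_imp_neq[symmetric])
  then show ?thesis
    unfolding green_sol_iff_ode2_solution by blast
qed

theorem lemma8p1:
  shows "\<exists>T0 > 0. \<exists>C > 0. \<forall>T \<ge> T0. \<forall>Q Q'. pendulum_QT T Q Q' \<longrightarrow>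
     (\<forall>f. continuous_on {-1..T+1} f \<longrightarrow>
        (\<exists>h h'. green_sol T Q f h h') \<and>
        (\<forall>h1 h1' h2 h2'. green_sol T Q f h1 h1' \<and> green_sol T Q f h2 h2' \<longrightarrow>
            (\<forall>t\<in>{-1..T+1}. h1 t = h2 t)) \<and>
        (\<forall>h h'. green_sol T Q f h h' \<longrightarrow>
            (\<forall>t\<in>{-1..T+1}. \<bar>h t\<bar> + \<bar>h' t\<bar> \<le> C * (SUP s\<in>{-1..T+1}. \<bar>f s\<bar>))))"
proof (rule exI[of _ 1], intro conjI exI[of _ "1000 * exp 3"] allI impI ballI)
  fix T :: real and Q Q' f :: "real \<Rightarrow> real"
  assume T: "1 \<le> T" and Q: "pendulum_QT T Q Q'" and f: "continuous_on {-1..T+1} f"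
  show "\<exists>h h'. green_sol T Q f h h'"
    using green_sol_exists[OF Q _ f] T by simp
  show "h1 t = h2 t" if "green_sol T Q f h1 h1' \<and> green_sol T Q f h2 h2'" and "t \<in> {-1..T+1}"
    for h1 h1' h2 h2' t
    using green_sol_unique[OF Q T] that by blast
  show "\<bar>h t\<bar> + \<bar>h' t\<bar> \<le> 1000 * exp 3 * (SUP s\<in>{-1..T+1}. \<bar>f s\<bar>)"
    if "green_sol T Q f h h'" and "t \<in> {-1..T+1}" for h h' t
    using green_sol_bound[OF Q T f that] .
qed simp_all

end
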